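(* Let $T\in\mathbb{N}$, $\Delta t>0$, $r\in\mathbb{R}$, $\mu\in\mathbb{R}$, $\sigma>0$, $S_0>0$, $B>0$, $K\in\mathbb{R}$, and $q(x)=(x-K)^+$. Let $S_{j+1}=S_j\exp((\mu-\frac{\sigma^2}{2})\Delta t+\sigma\sqrt{\Delta t}Z_j)$, $j=0,\dots,T-1$, with $Z_j$ i.i.d. standard normal, and let the knock-down-out barrier call payoff be $$V(S_1,\dots,S_T)=\begin{cases}q(S_T)&\text{if }\min_{j=1,\dots,T}S_j\ge B,\\0&\text{otherwise,}\end{cases}$$ with present value $PV_{t_0}(S_0)=e^{-rT\Delta t}\mathbb{E}(V(S_1,\dots,S_T))$. For $u=(u^{(1)},\dots,u^{(T)})\in[0,1]^T$ define recursively $S_0(u)=S_0$ and, for $t=0,\dots,T-1$, $$p_t=\Phi\left(\frac{\log(B/S_t(u))-(\mu-\frac{\sigma^2}{2})\Delta t}{\sigma\sqrt{\Delta t}}\right),\qquad S_{t+1}(u)=S_t(u)\exp\Big(\big(\mu-\tfrac{\sigma^2}{2}\big)\Delta t+\sigma\sqrt{\Delta t}\,\Phi^{-1}\big((1-p_t)u^{(t+1)}+p_t\big)\Big).$$ Then $$PV_{t_0}(S_0)=e^{-rT\Delta t}\int_0^1\cdots\int_0^1(1-p_0)\cdots(1-p_{T-1})\,q(S_T(u))\,\mathrm{d}u^{(T)}\cdots\mathrm{d}u^{(1)}.$$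
   Context: $\Phi$ is the standard normal cumulative distribution function and $\Phi^{-1}$ its inverse. Observation dates are equidistant with spacing $\Delta t$, so $t_T-t_0=T\Delta t$; $\mu=r-b$ with $b$ the dividend yield. *)

theory Defs
  imports "HOL-Probability.Probability"
begin

definition Phi :: "real \<Rightarrow> real" where
  "Phi x = measure (density lborel std_normal_density) {..x}"

text \<open>Inverse of Phi on (0,1); values at 0 and 1 (formally minus/plus infinity)
  are replaced by the arbitrary value 0, which only affects a null set.\<close>
definition Phi_inv :: "real \<Rightarrow> real" where
  "Phi_inv y = (if 0 < y \<and> y < 1 then (THE x. Phi x = y) else 0)"

fun gbm_path :: "real \<Rightarrow> real \<Rightarrow> real \<Rightarrow> real \<Rightarrow> (nat \<Rightarrow> real) \<Rightarrow> nat \<Rightarrow> real" where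
  "gbm_path mu sg dt s0 z 0 = s0"
| "gbm_path mu sg dt s0 z (Suc j) =
     gbm_path mu sg dt s0 z j * exp ((mu - sg\<^sup>2 / 2) * dt + sg * sqrt dt * z j)"

definition call_payoff :: "real \<Rightarrow> real \<Rightarrow> real" where
  "call_payoff K x = max (x - K) 0"

definition barrier_payoff :: "nat \<Rightarrow> real \<Rightarrow> real \<Rightarrow> (nat \<Rightarrow> real) \<Rightarrow> real" where
  "barrier_payoff T B K S = (if (\<forall>j\<in>{1..T}. S j \<ge> B) then call_payoff K (S T) else 0)"

definition ko_prob :: "real \<Rightarrow> real \<Rightarrow> real \<Rightarrow> real \<Rightarrow> real \<Rightarrow> real" where
  "ko_prob mu sg dt B s = Phi ((ln (B / s) - (mu - sg\<^sup>2 / 2) * dt) / (sg * sqrt dt))"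

text \<open>Conditional path S_t(u); u t plays the role of u^(t+1).\<close>
fun cond_path :: "real \<Rightarrow> real \<Rightarrow> real \<Rightarrow> real \<Rightarrow> real \<Rightarrow> (nat \<Rightarrow> real) \<Rightarrow> nat \<Rightarrow> real" where
  "cond_path mu sg dt B s0 u 0 = s0"
| "cond_path mu sg dt B s0 u (Suc t) =
     (let s = cond_path mu sg dt B s0 u t; p = ko_prob mu sg dt B s in
      s * exp ((mu - sg\<^sup>2 / 2) * dt + sg * sqrt dt * Phi_inv ((1 - p) * u t + p)))"

end

theory Submission
  imports Defs
begin

(* Condition on survival one monitoring date at a time. Given S_t = s, the path survives date t + 1
   iff Z_t >= c(s), where Phi (c(s)) = p_t. Dropping the knocked-out part of the Gaussian integral
   leaves mass 1 - p_t times the normal law truncated to [c(s), oo), and the inverse transform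
   Phi_inv ((1 - p_t) u + p_t) of a uniform u samples exactly that truncated law. Splitting off the
   last coordinate of the product measures, both sides of the theorem, viewed as functionals of the
   payoff f, satisfy I_(n+1) f = I_n (K f) with the same one-step operator K, and I_0 f = f. *)

section \<open>The standard normal distribution function and its inverse\<close>

abbreviation std_normal :: "real measure" where
  "std_normal \<equiv> density lborel std_normal_density"

abbreviation uniform_01 :: "real measure" where
  "uniform_01 \<equiv> uniform_measure lborel {0..1}"

interpretation std_normal: real_distribution std_normal
  by (simp add: real_distribution_def real_distribution_axioms_def prob_space_normal_density)

interpretation uniform_01: prob_space uniform_01
  by (rule prob_space_uniform_measure) auto

lemma null_sets_std_normal: "null_sets std_normal = null_sets lborel"
proof (intro set_eqI iffI)
  fix A assume "A \<in> null_sets std_normal"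
  then have "A \<in> sets lborel" and "AE x in lborel. x \<in> A \<longrightarrow> std_normal_density x = 0"
    by (simp_all add: null_sets_density_iff)
  moreover from this(2) have "AE x in lborel. x \<notin> A"
    by eventually_elim (metis normal_density_pos zero_less_one less_irrefl)
  ultimately show "A \<in> null_sets lborel" by (simp add: AE_iff_null_sets)
next
  fix A :: "real set" assume "A \<in> null_sets lborel"
  then have "AE x in lborel. x \<notin> A" by (rule AE_not_in)
  then show "A \<in> null_sets std_normal"
    using \<open>A \<in> null_sets lborel\<close> by (auto simp: null_sets_density_iff)
qed

lemma Phi_eq_cdf: "Phi = cdf std_normal"
  by (simp add: Phi_def cdf_def fun_eq_iff)

lemma Phi_strict_mono: "strict_mono Phi"
proof
  fix x y :: real assume "x < y"
  have "{x<..y} \<notin> null_sets lborel"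
    using \<open>x < y\<close> by (auto simp: null_sets_def)
  then have "measure std_normal {x<..y} \<noteq> 0"
    unfolding null_sets_std_normal[symmetric]
    by (auto simp: null_sets_def std_normal.emeasure_eq_measure)
  then show "Phi x < Phi y"
    using std_normal.cdf_diff_eq[OF \<open>x < y\<close>] measure_nonneg[of std_normal "{x<..y}"]
    unfolding Phi_eq_cdf by linarith
qed

lemma Phi_less_iff [simp]: "Phi x < Phi y \<longleftrightarrow> x < y"
  using Phi_strict_mono by (rule strict_mono_less)

lemma Phi_le_iff [simp]: "Phi x \<le> Phi y \<longleftrightarrow> x \<le> y"
  using Phi_strict_mono by (rule strict_mono_less_eq)

lemma Phi_inject [simp]: "Phi x = Phi y \<longleftrightarrow> x = y"
  using Phi_strict_mono by (rule strict_mono_eq)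

lemma borel_measurable_Phi [measurable]: "Phi \<in> borel_measurable borel"
  by (rule borel_measurable_mono) (simp add: mono_def)

lemma isCont_Phi: "isCont Phi x"
  by (simp add: Phi_eq_cdf std_normal.isCont_cdf measure_def emeasure_density
      null_sets_std_normal[symmetric])

lemma Phi_pos: "0 < Phi x"
  using std_normal.cdf_nonneg[of "x - 1"] Phi_less_iff[of "x - 1" x] by (simp add: Phi_eq_cdf)

lemma Phi_less_1: "Phi x < 1"
  using std_normal.cdf_bounded_prob[of "x + 1"] Phi_less_iff[of x "x + 1"] by (simp add: Phi_eq_cdf)

lemma Phi_surj: assumes "0 < y" "y < 1" obtains x where "Phi x = y"
proof -
  have "eventually (\<lambda>x. Phi x < y) at_bot" "eventually (\<lambda>x. y < Phi x) at_top"
    using order_tendstoD(2)[OF std_normal.cdf_lim_at_bot \<open>0 < y\<close>]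
      order_tendstoD(1)[OF std_normal.cdf_lim_at_top_prob \<open>y < 1\<close>]
    by (simp_all add: Phi_eq_cdf)
  then obtain a b where "Phi a < y" "y < Phi b"
    by (metis eventually_at_bot_linorder eventually_at_top_linorder order.refl)
  then have "a \<le> b"
    by (metis Phi_less_iff less_imp_le less_trans)
  with \<open>Phi a < y\<close> \<open>y < Phi b\<close> show thesis
    using IVT[of Phi a y b] isCont_Phi that by (auto intro: less_imp_le)
qed

lemma Phi_Phi_inv: assumes "0 < y" "y < 1" shows "Phi (Phi_inv y) = y"
proof -
  obtain x where "Phi x = y" using Phi_surj assms .
  then have "\<exists>!x. Phi x = y" by auto
  from theI'[OF this] show ?thesis using assms unfolding Phi_inv_def by simp
qed

lemma le_Phi_inv_iff: "0 < y \<Longrightarrow> y < 1 \<Longrightarrow> x \<le> Phi_inv y \<longleftrightarrow> Phi x \<le> y"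
  using Phi_le_iff[of x "Phi_inv y"] by (simp add: Phi_Phi_inv)

lemma Phi_inv_le_iff: "0 < y \<Longrightarrow> y < 1 \<Longrightarrow> Phi_inv y \<le> x \<longleftrightarrow> y \<le> Phi x"
  using Phi_le_iff[of "Phi_inv y" x] by (simp add: Phi_Phi_inv)

text \<open>Outside \<open>(0, 1)\<close> the junk value \<open>Phi_inv y = 0\<close> enters the sublevel sets.\<close>
lemma Phi_inv_sublevel:
  "{y. Phi_inv y \<le> x} = {0<..Phi x} \<union> (if 0 \<le> x then - {0<..<1} else {})"
proof (intro set_eqI)
  fix y
  show "y \<in> {y. Phi_inv y \<le> x} \<longleftrightarrow> y \<in> {0<..Phi x} \<union> (if 0 \<le> x then - {0<..<1} else {})"
  proof (cases "0 < y \<and> y < 1")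
    case True
    then show ?thesis by (auto simp: Phi_inv_le_iff)
  next
    case False
    then have "Phi_inv y = 0" by (auto simp: Phi_inv_def)
    with False show ?thesis using Phi_pos[of x] Phi_less_1[of x] by auto
  qed
qed

lemma borel_measurable_Phi_inv [measurable]: "Phi_inv \<in> borel_measurable borel"
  unfolding borel_measurable_iff_le
proof
  fix x
  have "- {0<..<1::real} \<in> sets borel" by (intro borel_closed closed_Compl) auto
  then show "{y \<in> space borel. Phi_inv y \<le> x} \<in> sets borel"
    by (simp add: Phi_inv_sublevel)
qed

lemma measure_uniform_Phi_inv_le: "measure uniform_01 {y. Phi_inv y \<le> x} = Phi x"
proof -
  have "{y. Phi_inv y \<le> x} \<inter> {0..1} = {0<..Phi x} \<union> (if 0 \<le> x then {0, 1} else {})"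
    using Phi_pos[of x] Phi_less_1[of x] by (auto simp: Phi_inv_sublevel)
  then have "emeasure lborel ({y. Phi_inv y \<le> x} \<inter> {0..1}) = emeasure lborel {0<..Phi x}"
    by (simp add: emeasure_Un_null_set finite_imp_null_set_lborel)
  then show ?thesis
    using Phi_pos[of x] by (simp add: measure_def Int_commute divide_ennreal_def)
qed

lemma distr_uniform_Phi_inv: "distr uniform_01 borel Phi_inv = std_normal"
proof (rule cdf_unique)
  show "real_distribution (distr uniform_01 borel Phi_inv)" by simp
  show "real_distribution std_normal" ..
  show "cdf (distr uniform_01 borel Phi_inv) = cdf std_normal"
    by (simp add: fun_eq_iff cdf_def measure_distr vimage_def measure_uniform_Phi_inv_le Phi_def)
qed

section \<open>Sampling the truncated normal law\<close>

lemma nn_integral_uniform_01: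
  "g \<in> borel_measurable borel \<Longrightarrow>
    (\<integral>\<^sup>+ v. g v \<partial>uniform_01) = (\<integral>\<^sup>+ v. g v * indicator {0..1} v \<partial>lborel)"
  by (simp add: nn_integral_uniform_measure divide_ennreal_def)

lemma affine_mem_Icc_iff:
  fixes p u :: real
  assumes "p < 1"
  shows "(1 - p) * u + p \<in> {p..1} \<longleftrightarrow> u \<in> {0..1}"
proof -
  have "p \<le> (1 - p) * u + p \<longleftrightarrow> 0 \<le> u"
    using assms by (simp add: zero_le_mult_iff)
  moreover have "(1 - p) * u + p \<le> 1 \<longleftrightarrow> u \<le> 1"
    using mult_le_cancel_left_pos[of "1 - p" u 1] assms by argo
  ultimately show ?thesis by auto
qed

lemma nn_integral_Icc_eq_uniform_01:
  assumes "p < 1" and [measurable]: "h \<in> borel_measurable borel"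
  shows "(\<integral>\<^sup>+ v. h v * indicator {p..1} v \<partial>lborel)
    = ennreal (1 - p) * (\<integral>\<^sup>+ u. h ((1 - p) * u + p) \<partial>uniform_01)"
proof -
  have "(\<integral>\<^sup>+ v. h v * indicator {p..1} v \<partial>lborel)
      = ennreal (1 - p) *
          (\<integral>\<^sup>+ u. h ((1 - p) * u + p) * indicator {p..1} ((1 - p) * u + p) \<partial>lborel)"
    using assms
    by (subst nn_integral_real_affine[where c = "1 - p" and t = p]) (auto simp: add.commute)
  also have "\<dots> = ennreal (1 - p) * (\<integral>\<^sup>+ u. h ((1 - p) * u + p) * indicator {0..1} u \<partial>lborel)"
    using affine_mem_Icc_iff[OF \<open>p < 1\<close>] unfolding indicator_def by simp
  also have "\<dots> = ennreal (1 - p) * (\<integral>\<^sup>+ u. h ((1 - p) * u + p) \<partial>uniform_01)"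
    by (subst nn_integral_uniform_01) simp_all
  finally show ?thesis .
qed

lemma nn_integral_std_normal_truncated:
  assumes [measurable]: "g \<in> borel_measurable borel"
  shows "(\<integral>\<^sup>+ y. indicator {c..} y * g y \<partial>std_normal)
    = ennreal (1 - Phi c) * (\<integral>\<^sup>+ v. g (Phi_inv ((1 - Phi c) * v + Phi c)) \<partial>uniform_01)"
proof -
  have "(\<integral>\<^sup>+ y. indicator {c..} y * g y \<partial>std_normal)
      = (\<integral>\<^sup>+ v. indicator {c..} (Phi_inv v) * g (Phi_inv v) * indicator {0..1} v \<partial>lborel)"
    by (simp add: nn_integral_distr nn_integral_uniform_01 flip: distr_uniform_Phi_inv)
  also have "\<dots> = (\<integral>\<^sup>+ v. g (Phi_inv v) * indicator {Phi c..1} v \<partial>lborel)"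
  proof (rule nn_integral_cong_AE)
    have "AE v in lborel. v \<noteq> 0" "AE v in lborel. v \<noteq> 1" by (rule AE_lborel_singleton)+
    then show "AE v in lborel. indicator {c..} (Phi_inv v) * g (Phi_inv v) * indicator {0..1} v
        = g (Phi_inv v) * indicator {Phi c..1} v"
    proof eventually_elim
      case (elim v)
      show ?case
      proof (cases "0 < v \<and> v < 1")
        case True
        then show ?thesis by (simp add: indicator_def le_Phi_inv_iff)
      next
        case False
        with elim Phi_pos[of c] have "v \<notin> {0..1}" "v \<notin> {Phi c..1}" by auto
        then show ?thesis by simp
      qed
    qed
  qed
  also have "\<dots> = ennreal (1 - Phi c) *
      (\<integral>\<^sup>+ v. g (Phi_inv ((1 - Phi c) * v + Phi c)) \<partial>uniform_01)"
    using Phi_less_1 by (rule nn_integral_Icc_eq_uniform_01) measurable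
  finally show ?thesis .
qed

section \<open>Integrals over finite products\<close>

lemma nn_integral_PiM_lessThan_Suc:
  assumes "sigma_finite_measure N" and "f \<in> borel_measurable (PiM {0..<Suc n} (\<lambda>_. N))"
  shows "(\<integral>\<^sup>+ z. f z \<partial>PiM {0..<Suc n} (\<lambda>_. N))
    = (\<integral>\<^sup>+ z. (\<integral>\<^sup>+ y. f (z(n := y)) \<partial>N) \<partial>PiM {0..<n} (\<lambda>_. N))"
proof -
  interpret product_sigma_finite "\<lambda>_. N"
    by (simp add: product_sigma_finite_def assms(1))
  show ?thesis
    using assms(2) unfolding atLeast0_lessThan_Suc by (intro product_nn_integral_insert) auto
qed

lemma nn_integral_if_0:
  "(\<integral>\<^sup>+ y. (if P then g y else 0) \<partial>M) = (if P then \<integral>\<^sup>+ y. g y \<partial>M else 0)"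
  by (cases P) simp_all

lemma measurable_component_borel:
  "sets (M i) = sets borel \<Longrightarrow> i \<in> I \<Longrightarrow> (\<lambda>z. z i) \<in> borel_measurable (PiM I M)"
  using measurable_component_singleton[of i I M] measurable_cong_sets by blast

lemma (in prob_space) expectation_iid_std_normal:
  fixes Z :: "nat \<Rightarrow> 'a \<Rightarrow> real" and n :: nat and h :: "(nat \<Rightarrow> real) \<Rightarrow> real"
  assumes "indep_vars (\<lambda>_. borel) Z {0..<n}"
    and "\<And>j. j < n \<Longrightarrow> distributed M lborel (Z j) std_normal_density"
    and "h \<in> borel_measurable (PiM {0..<n} (\<lambda>_. borel))"
  shows "expectation (\<lambda>\<omega>. h (\<lambda>j\<in>{0..<n}. Z j \<omega>)) = integral\<^sup>L (PiM {0..<n} (\<lambda>_. std_normal)) h"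
proof (cases "n = 0")
  case True
  then have "{0..<n} = {}" by simp
  then show ?thesis
    by (simp add: PiM_empty lebesgue_integral_count_space_finite prob_space restrict_def)
next
  case False
  have law: "distr M borel (Z j) = std_normal" if "j < n" for j
  proof -
    have "distr M borel (Z j) = distr M lborel (Z j)" by (rule distr_cong) auto
    also have "\<dots> = std_normal"
      using assms(2)[OF that] by (simp add: distributed_distr_eq_density)
    finally show ?thesis .
  qed
  have rv: "random_variable borel (Z j)" if "j < n" for j
    using distributed_measurable[OF assms(2)[OF that]] measurable_lborel1 by blast
  have joint_law: "distr M (PiM {0..<n} (\<lambda>_. borel)) (\<lambda>\<omega>. \<lambda>j\<in>{0..<n}. Z j \<omega>)
      = PiM {0..<n} (\<lambda>_. std_normal)"
    using assms(1) False rv law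
    by (subst (asm) indep_vars_iff_distr_eq_PiM') (auto intro: PiM_cong)
  have "(\<lambda>\<omega>. \<lambda>j\<in>{0..<n}. Z j \<omega>) \<in> measurable M (PiM {0..<n} (\<lambda>_. borel))"
    using rv by (intro measurable_restrict) auto
  from integral_distr[OF this assms(3)] show ?thesis
    by (simp add: joint_law)
qed

section \<open>Barrier paths\<close>

context
  fixes mu sg dt B :: real
begin

definition gbm_step :: "real \<Rightarrow> real \<Rightarrow> real" where
  "gbm_step s z = s * exp ((mu - sg\<^sup>2 / 2) * dt + sg * sqrt dt * z)"

lemma gbm_path_Suc [simp]:
  "gbm_path mu sg dt s0 z (Suc j) = gbm_step (gbm_path mu sg dt s0 z j) (z j)"
  by (simp add: gbm_step_def)

lemma cond_path_Suc [simp]: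
  "cond_path mu sg dt B s0 u (Suc t) =
     gbm_step (cond_path mu sg dt B s0 u t)
       (Phi_inv ((1 - ko_prob mu sg dt B (cond_path mu sg dt B s0 u t)) * u t
                 + ko_prob mu sg dt B (cond_path mu sg dt B s0 u t)))"
  by (simp add: gbm_step_def Let_def)

declare gbm_path.simps(2) [simp del] cond_path.simps(2) [simp del]

lemma borel_measurable_gbm_step [measurable (raw)]:
  assumes [measurable]: "f \<in> borel_measurable M" "g \<in> borel_measurable M"
  shows "(\<lambda>x. gbm_step (f x) (g x)) \<in> borel_measurable M"
  unfolding gbm_step_def by measurable

lemma gbm_step_pos: "0 < s \<Longrightarrow> 0 < gbm_step s z"
  by (simp add: gbm_step_def)

lemma cond_path_pos: "0 < s0 \<Longrightarrow> 0 < cond_path mu sg dt B s0 u t"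
  by (induction t) (simp_all add: gbm_step_pos)

definition ko_threshold :: "real \<Rightarrow> real" where
  "ko_threshold s = (ln (B / s) - (mu - sg\<^sup>2 / 2) * dt) / (sg * sqrt dt)"

lemma ko_prob_eq_Phi_threshold: "ko_prob mu sg dt B s = Phi (ko_threshold s)"
  by (simp add: ko_prob_def ko_threshold_def)

lemma borel_measurable_ko_prob [measurable]: "ko_prob mu sg dt B \<in> borel_measurable borel"
  unfolding ko_prob_def by measurable

lemma le_gbm_step_iff:
  assumes "0 < s" "0 < sg" "0 < dt" "0 < B"
  shows "B \<le> gbm_step s z \<longleftrightarrow> ko_threshold s \<le> z"
proof -
  have "B \<le> gbm_step s z \<longleftrightarrow> ln B \<le> ln (gbm_step s z)"
    using assms by (simp add: gbm_step_pos)
  also have "\<dots> \<longleftrightarrow> ln B \<le> ln s + ((mu - sg\<^sup>2 / 2) * dt + sg * sqrt dt * z)"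
    using assms by (simp add: gbm_step_def ln_mult)
  also have "\<dots> \<longleftrightarrow> ln (B / s) - (mu - sg\<^sup>2 / 2) * dt \<le> sg * sqrt dt * z"
    using assms by (simp add: ln_div) linarith
  also have "\<dots> \<longleftrightarrow> ko_threshold s \<le> z"
    using assms by (simp add: ko_threshold_def pos_divide_le_eq mult.commute)
  finally show ?thesis .
qed

definition knock_out_step :: "(real \<Rightarrow> ennreal) \<Rightarrow> real \<Rightarrow> ennreal" where
  "knock_out_step f s =
    (\<integral>\<^sup>+ z. (if B \<le> gbm_step s z then f (gbm_step s z) else 0) \<partial>std_normal)"

lemma borel_measurable_knock_out_step [measurable]:
  assumes [measurable]: "f \<in> borel_measurable borel"
  shows "knock_out_step f \<in> borel_measurable borel"
  unfolding knock_out_step_def by measurable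

lemma knock_out_step_eq_uniform:
  assumes [measurable]: "f \<in> borel_measurable borel"
    and "0 < s" "0 < sg" "0 < dt" "0 < B"
  defines "p \<equiv> ko_prob mu sg dt B s"
  shows "knock_out_step f s
    = ennreal (1 - p) * (\<integral>\<^sup>+ v. f (gbm_step s (Phi_inv ((1 - p) * v + p))) \<partial>uniform_01)"
proof -
  have "knock_out_step f s
      = (\<integral>\<^sup>+ z. indicator {ko_threshold s..} z * f (gbm_step s z) \<partial>std_normal)"
    unfolding knock_out_step_def
    by (intro nn_integral_cong) (simp add: le_gbm_step_iff[OF assms(2-5)])
  also have "\<dots> = ennreal (1 - p) *
      (\<integral>\<^sup>+ v. f (gbm_step s (Phi_inv ((1 - p) * v + p))) \<partial>uniform_01)"
    unfolding p_def ko_prob_eq_Phi_threshold by (rule nn_integral_std_normal_truncated) measurable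
  finally show ?thesis .
qed

lemma gbm_path_cong:
  "(\<And>i. i < j \<Longrightarrow> z i = z' i) \<Longrightarrow> gbm_path mu sg dt s0 z j = gbm_path mu sg dt s0 z' j"
  by (induction j) auto

lemma cond_path_cong:
  "(\<And>i. i < t \<Longrightarrow> u i = u' i) \<Longrightarrow> cond_path mu sg dt B s0 u t = cond_path mu sg dt B s0 u' t"
  by (induction t) auto

lemma measurable_gbm_path [measurable]:
  assumes "\<And>i. sets (M i) = sets borel" and "{0..<j} \<subseteq> I"
  shows "(\<lambda>z. gbm_path mu sg dt s0 z j) \<in> borel_measurable (PiM I M)"
  using assms(2)
proof (induction j)
  case (Suc j)
  have "{0..<j} \<subseteq> I" using Suc.prems by auto
  then have [measurable]: "(\<lambda>z. gbm_path mu sg dt s0 z j) \<in> borel_measurable (PiM I M)"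
    by (rule Suc.IH)
  have [measurable]: "(\<lambda>z. z j) \<in> borel_measurable (PiM I M)"
    using Suc.prems by (intro measurable_component_borel assms(1)) auto
  show ?case unfolding gbm_path_Suc by measurable
qed simp

lemma measurable_cond_path [measurable]:
  assumes "\<And>i. sets (M i) = sets borel" and "{0..<t} \<subseteq> I"
  shows "(\<lambda>u. cond_path mu sg dt B s0 u t) \<in> borel_measurable (PiM I M)"
  using assms(2)
proof (induction t)
  case (Suc t)
  have "{0..<t} \<subseteq> I" using Suc.prems by auto
  then have [measurable]: "(\<lambda>u. cond_path mu sg dt B s0 u t) \<in> borel_measurable (PiM I M)"
    by (rule Suc.IH)
  have [measurable]: "(\<lambda>u. u t) \<in> borel_measurable (PiM I M)"
    using Suc.prems by (intro measurable_component_borel assms(1)) auto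
  show ?case unfolding cond_path_Suc by measurable
qed simp

lemma ko_prob_less_1: "ko_prob mu sg dt B s < 1"
  by (simp add: ko_prob_def Phi_less_1)

definition knock_out_integral :: "nat \<Rightarrow> (real \<Rightarrow> ennreal) \<Rightarrow> real \<Rightarrow> ennreal" where
  "knock_out_integral n f s0 =
    (\<integral>\<^sup>+ z. (if \<forall>j\<in>{1..n}. B \<le> gbm_path mu sg dt s0 z j
              then f (gbm_path mu sg dt s0 z n) else 0)
      \<partial>PiM {0..<n} (\<lambda>_. std_normal))"

definition conditional_integral :: "nat \<Rightarrow> (real \<Rightarrow> ennreal) \<Rightarrow> real \<Rightarrow> ennreal" where
  "conditional_integral n f s0 =
    (\<integral>\<^sup>+ u. ennreal (\<Prod>t<n. 1 - ko_prob mu sg dt B (cond_path mu sg dt B s0 u t))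
        * f (cond_path mu sg dt B s0 u n) \<partial>PiM {0..<n} (\<lambda>_. uniform_01))"

lemma knock_out_integral_0: "knock_out_integral 0 f s0 = f s0"
  by (simp add: knock_out_integral_def PiM_empty nn_integral_count_space_finite)

lemma conditional_integral_0: "conditional_integral 0 f s0 = f s0"
  by (simp add: conditional_integral_def PiM_empty nn_integral_count_space_finite)

lemma knock_out_integral_Suc:
  assumes [measurable]: "f \<in> borel_measurable borel"
  shows "knock_out_integral (Suc n) f s0 = knock_out_integral n (knock_out_step f) s0"
proof -
  let ?V = "\<lambda>z. if \<forall>j\<in>{1..Suc n}. B \<le> gbm_path mu sg dt s0 z j
    then f (gbm_path mu sg dt s0 z (Suc n)) else 0"
  have "knock_out_integral (Suc n) f s0
      = (\<integral>\<^sup>+ z. (\<integral>\<^sup>+ y. ?V (z(n := y)) \<partial>std_normal) \<partial>PiM {0..<n} (\<lambda>_. std_normal))"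
    unfolding knock_out_integral_def
    by (intro nn_integral_PiM_lessThan_Suc std_normal.sigma_finite_measure_axioms) measurable
  also have "\<dots> = knock_out_integral n (knock_out_step f) s0"
    unfolding knock_out_integral_def
  proof (intro nn_integral_cong)
    fix z :: "nat \<Rightarrow> real"
    let ?S = "gbm_path mu sg dt s0 z"
    have prefix: "gbm_path mu sg dt s0 (z(n := y)) j = ?S j" if "j \<le> n" for y j
      using that by (intro gbm_path_cong) auto
    then have inner: "?V (z(n := y)) = (if \<forall>j\<in>{1..n}. B \<le> ?S j then
        (if B \<le> gbm_step (?S n) y then f (gbm_step (?S n) y) else 0) else 0)" for y
      by (auto simp: atLeastAtMostSuc_conv)
    then show "(\<integral>\<^sup>+ y. ?V (z(n := y)) \<partial>std_normal)
        = (if \<forall>j\<in>{1..n}. B \<le> ?S j then knock_out_step f (?S n) else 0)"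
      unfolding inner knock_out_step_def by (simp only: nn_integral_if_0)
  qed
  finally show ?thesis .
qed

lemma conditional_integral_Suc:
  assumes [measurable]: "f \<in> borel_measurable borel"
    and "0 < s0" "0 < sg" "0 < dt" "0 < B"
  shows "conditional_integral (Suc n) f s0 = conditional_integral n (knock_out_step f) s0"
proof -
  let ?S = "cond_path mu sg dt B s0"
  let ?W = "\<lambda>u. ennreal (\<Prod>t<Suc n. 1 - ko_prob mu sg dt B (?S u t)) * f (?S u (Suc n))"
  have "conditional_integral (Suc n) f s0
      = (\<integral>\<^sup>+ u. (\<integral>\<^sup>+ y. ?W (u(n := y)) \<partial>uniform_01) \<partial>PiM {0..<n} (\<lambda>_. uniform_01))"
    unfolding conditional_integral_def
    by (intro nn_integral_PiM_lessThan_Suc uniform_01.sigma_finite_measure_axioms) measurable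
  also have "\<dots> = conditional_integral n (knock_out_step f) s0"
    unfolding conditional_integral_def
  proof (intro nn_integral_cong)
    fix u :: "nat \<Rightarrow> real"
    let ?p = "ko_prob mu sg dt B (?S u n)"
    have prefix: "?S (u(n := y)) t = ?S u t" if "t \<le> n" for y t
      using that by (intro cond_path_cong) auto
    have "?W (u(n := y)) = ennreal (\<Prod>t<n. 1 - ko_prob mu sg dt B (?S u t))
        * (ennreal (1 - ?p) * f (gbm_step (?S u n) (Phi_inv ((1 - ?p) * y + ?p))))" for y
      using prefix ko_prob_less_1
      by (simp add: ennreal_mult less_imp_le prod_nonneg mult.assoc)
    then show "(\<integral>\<^sup>+ y. ?W (u(n := y)) \<partial>uniform_01)
        = ennreal (\<Prod>t<n. 1 - ko_prob mu sg dt B (?S u t)) * knock_out_step f (?S u n)"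
      using cond_path_pos[OF \<open>0 < s0\<close>]
      by (simp add: nn_integral_cmult knock_out_step_eq_uniform assms)
  qed
  finally show ?thesis .
qed

lemma knock_out_integral_eq_conditional_integral:
  assumes "0 < sg" "0 < dt" "0 < B" "0 < s0" and "f \<in> borel_measurable borel"
  shows "knock_out_integral n f s0 = conditional_integral n f s0"
  using assms(5)
proof (induction n arbitrary: f)
  case 0
  show ?case by (simp add: knock_out_integral_0 conditional_integral_0)
next
  case (Suc n)
  then show ?case
    by (simp add: knock_out_integral_Suc conditional_integral_Suc assms(1-4))
qed

lemma expectation_knock_out_eq_conditional_integral:
  fixes M :: "'a measure" and Z :: "nat \<Rightarrow> 'a \<Rightarrow> real" and f :: "real \<Rightarrow> real"
  assumes "prob_space M" and "prob_space.indep_vars M (\<lambda>_. borel) Z {0..<T}"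
    and "\<And>j. j < T \<Longrightarrow> distributed M lborel (Z j) std_normal_density"
    and "0 < sg" "0 < dt" "0 < S0" "0 < B"
    and [measurable]: "f \<in> borel_measurable borel" and f_nonneg: "\<And>x. 0 \<le> f x"
  shows "prob_space.expectation M (\<lambda>\<omega>.
      if \<forall>j\<in>{1..T}. B \<le> gbm_path mu sg dt S0 (\<lambda>j. Z j \<omega>) j
      then f (gbm_path mu sg dt S0 (\<lambda>j. Z j \<omega>) T) else 0)
    = integral\<^sup>L (PiM {0..<T} (\<lambda>_. uniform_01))
        (\<lambda>u. (\<Prod>t<T. 1 - ko_prob mu sg dt B (cond_path mu sg dt B S0 u t))
             * f (cond_path mu sg dt B S0 u T))"
proof -
  interpret prob_space M by fact
  let ?V = "\<lambda>z. if \<forall>j\<in>{1..T}. B \<le> gbm_path mu sg dt S0 z j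
    then f (gbm_path mu sg dt S0 z T) else 0"
  let ?W = "\<lambda>u. (\<Prod>t<T. 1 - ko_prob mu sg dt B (cond_path mu sg dt B S0 u t))
    * f (cond_path mu sg dt B S0 u T)"
  have V_restrict: "?V (\<lambda>j. Z j \<omega>) = ?V (\<lambda>j\<in>{0..<T}. Z j \<omega>)" for \<omega>
  proof -
    have "gbm_path mu sg dt S0 (\<lambda>j. Z j \<omega>) j = gbm_path mu sg dt S0 (\<lambda>j\<in>{0..<T}. Z j \<omega>) j"
      if "j \<le> T" for j
      using that by (intro gbm_path_cong) auto
    then show ?thesis by auto
  qed
  have V_meas: "?V \<in> borel_measurable (PiM {0..<T} (\<lambda>_. std_normal))"
    by measurable
  have W_meas: "?W \<in> borel_measurable (PiM {0..<T} (\<lambda>_. uniform_01))"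
    by measurable
  have W_nonneg: "0 \<le> (\<Prod>t<T. 1 - ko_prob mu sg dt B (cond_path mu sg dt B S0 u t))" for u
    using ko_prob_less_1 by (intro prod_nonneg) (simp add: less_imp_le)
  have "expectation (\<lambda>\<omega>. ?V (\<lambda>j. Z j \<omega>)) = integral\<^sup>L (PiM {0..<T} (\<lambda>_. std_normal)) ?V"
    unfolding V_restrict using assms(2,3)
    by (intro expectation_iid_std_normal) measurable
  also have "\<dots> = enn2real (knock_out_integral T (\<lambda>x. ennreal (f x)) S0)"
    unfolding knock_out_integral_def
    by (subst integral_eq_nn_integral[OF V_meas]) (auto intro: f_nonneg
        intro!: arg_cong[where f = enn2real] nn_integral_cong)
  also have "\<dots> = enn2real (conditional_integral T (\<lambda>x. ennreal (f x)) S0)"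
    using assms by (simp add: knock_out_integral_eq_conditional_integral)
  also have "\<dots> = integral\<^sup>L (PiM {0..<T} (\<lambda>_. uniform_01)) ?W"
    unfolding conditional_integral_def
    by (subst integral_eq_nn_integral[OF W_meas])
      (auto intro!: mult_nonneg_nonneg simp: ennreal_mult f_nonneg W_nonneg)
  finally show ?thesis .
qed

end

theorem theorem2p8:
  fixes M :: "'a measure" and Z :: "nat \<Rightarrow> 'a \<Rightarrow> real"
    and T :: nat and dt r mu sg S0 B K :: real
  assumes "prob_space M"
    and "prob_space.indep_vars M (\<lambda>_. borel) Z {0..<T}"
    and "\<And>j. j < T \<Longrightarrow> distributed M lborel (Z j) std_normal_density"
    and "dt > 0" and "sg > 0" and "S0 > 0" and "B > 0"
  shows "exp (- r * real T * dt) *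
           prob_space.expectation M
             (\<lambda>\<omega>. barrier_payoff T B K (gbm_path mu sg dt S0 (\<lambda>j. Z j \<omega>)))
       = exp (- r * real T * dt) *
           integral\<^sup>L (PiM {0..<T} (\<lambda>_. uniform_measure lborel {0..1::real}))
             (\<lambda>u. (\<Prod>t<T. 1 - ko_prob mu sg dt B (cond_path mu sg dt B S0 u t))
                  * call_payoff K (cond_path mu sg dt B S0 u T))"
proof -
  have [measurable]: "call_payoff K \<in> borel_measurable borel"
    unfolding call_payoff_def by measurable
  then show ?thesis
    unfolding barrier_payoff_def using assms
    by (subst expectation_knock_out_eq_conditional_integral) (auto simp: call_payoff_def)
qed

end
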